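(* Let $\mathfrak{P}$ be a compactness-like topological property, let $X$ be a space, let $Y$ be an extension of $X$ with compact remainder, let $\zeta Y$ be a compactification of $Y$, and let $\phi:\beta X\to\zeta Y$ be the continuous extension of the identity of $X$. Then $Y\in\mathscr{E}_\mathfrak{P}(X)$ if and only if $X$ is locally-$\mathfrak{P}$ and $\beta X\setminus\lambda_\mathfrak{P}X\subseteq\phi^{-1}[Y\setminus X]$.
   Context: All spaces are completely regular Hausdorff; $\beta X$ is the Stone–Čech compactification. An extension of $X$ is a space containing $X$ as a dense subspace; its remainder is $Y\setminus X$. $\mathscr{E}_\mathfrak{P}(X)$ is the set of all extensions of $X$ with $\mathfrak{P}$ and compact remainder. $X$ is locally-$\mathfrak{P}$ if each point has an open neighborhood whose closure has $\mathfrak{P}$. $\mathrm{Coz}(X)$ is the set of cozero-sets of $X$. $\lambda_\mathfrak{P}X=\bigcup\{\mathrm{int}_{\beta X}\mathrm{cl}_{\beta X}C: C\in\mathrm{Coz}(X),\ \mathrm{cl}_XC\text{ has }\mathfrak{P}\}$. A topological property is compactness-like if it is hereditary to clopen subspaces, finitely additive (finite disjoint unions of closed subspaces with $\mathfrak{P}$ have $\mathfrak{P}$), invariant and inverse invariant under perfect surjections (closed continuous surjections with compact fibers), and satisfies Mrówka's condition (W): if a space $Z$ has a point $p$ with an open base $\mathscr{B}$ at $p$ such that $Z\setminus B$ has $\mathfrak{P}$ for all $B\in\mathscr{B}$, then $Z$ has $\mathfrak{P}$. *)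

theory Defs
  imports "HOL-Analysis.Analysis"
begin

definition tychonoff :: "'a topology \<Rightarrow> bool" where
  "tychonoff X \<longleftrightarrow> completely_regular_space X \<and> Hausdorff_space X"

definition mrowka_W :: "('a topology \<Rightarrow> bool) \<Rightarrow> bool" where
  "mrowka_W P \<longleftrightarrow>
     (\<forall>Z p \<B>. tychonoff Z \<and> p \<in> topspace Z \<and>
        (\<forall>B\<in>\<B>. openin Z B \<and> p \<in> B) \<and>
        (\<forall>U. openin Z U \<and> p \<in> U \<longrightarrow> (\<exists>B\<in>\<B>. B \<subseteq> U)) \<and>
        (\<forall>B\<in>\<B>. P (subtopology Z (topspace Z - B)))
      \<longrightarrow> P Z)"

definition compactness_like :: "('a topology \<Rightarrow> bool) \<Rightarrow> bool" where
  "compactness_like P \<longleftrightarrow>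
     \<comment> \<open>hereditary to clopen subspaces\<close>
     (\<forall>Z A. tychonoff Z \<and> P Z \<and> closedin Z A \<and> openin Z A \<longrightarrow> P (subtopology Z A)) \<and>
     \<comment> \<open>finitely additive\<close>
     (\<forall>Z \<A>. tychonoff Z \<and> finite \<A> \<and> \<Union>\<A> = topspace Z \<and> disjoint \<A> \<and>
         (\<forall>A\<in>\<A>. closedin Z A \<and> P (subtopology Z A)) \<longrightarrow> P Z) \<and>
     \<comment> \<open>invariant and inverse invariant under perfect surjections\<close>
     (\<forall>Z T f. tychonoff Z \<and> tychonoff T \<and> perfect_map Z T f \<longrightarrow> (P Z \<longleftrightarrow> P T)) \<and>
     \<comment> \<open>Mrowka's condition (W)\<close>
     mrowka_W P"

definition Coz :: "'a topology \<Rightarrow> 'a set set" where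
  "Coz X = {{x \<in> topspace X. f x \<noteq> 0} | f. continuous_map X euclideanreal f}"

definition is_extension :: "'a topology \<Rightarrow> 'a topology \<Rightarrow> bool" where
  "is_extension X Y \<longleftrightarrow> topspace X \<subseteq> topspace Y \<and> subtopology Y (topspace X) = X \<and>
     Y closure_of (topspace X) = topspace Y"

definition compact_remainder :: "'a topology \<Rightarrow> 'a topology \<Rightarrow> bool" where
  "compact_remainder X Y \<longleftrightarrow> compactin Y (topspace Y - topspace X)"

definition is_compactification :: "'a topology \<Rightarrow> 'a topology \<Rightarrow> bool" where
  "is_compactification X K \<longleftrightarrow> is_extension X K \<and> compact_space K \<and> Hausdorff_space K"

definition is_stone_cech :: "'a topology \<Rightarrow> 'a topology \<Rightarrow> bool" where
  "is_stone_cech X B \<longleftrightarrow> is_compactification X B \<and>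
     (\<forall>f. continuous_map X euclideanreal f \<and> bounded (f ` topspace X) \<longrightarrow>
        (\<exists>g. continuous_map B euclideanreal g \<and> (\<forall>x\<in>topspace X. g x = f x)))"

text \<open>The set E_P(X) of extensions of X with P and compact remainder (membership).\<close>
definition in_E :: "('a topology \<Rightarrow> bool) \<Rightarrow> 'a topology \<Rightarrow> 'a topology \<Rightarrow> bool" where
  "in_E P X Y \<longleftrightarrow> is_extension X Y \<and> compact_remainder X Y \<and> P Y"

definition locally_P :: "('a topology \<Rightarrow> bool) \<Rightarrow> 'a topology \<Rightarrow> bool" where
  "locally_P P X \<longleftrightarrow> (\<forall>x\<in>topspace X. \<exists>U. openin X U \<and> x \<in> U \<and>
       P (subtopology X (X closure_of U)))"

definition lambda_P :: "('a topology \<Rightarrow> bool) \<Rightarrow> 'a topology \<Rightarrow> 'a topology \<Rightarrow> 'a set" where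
  "lambda_P P X B = \<Union>{B interior_of (B closure_of C) | C. C \<in> Coz X \<and>
       P (subtopology X (X closure_of C))}"

end

theory Submission
  imports Defs
begin

text \<open>
  Compactness-like properties are closed-hereditary and additive over finite closed covers:
  the disjoint sum of the pieces maps perfectly onto the whole space.

  If \<open>Y\<close> has \<open>P\<close>, take a point of \<open>\<beta>X\<close> whose image under \<open>\<phi>\<close> is not in the compact
  remainder, and a Urysohn function on \<open>\<zeta>Y\<close> that is \<open>1\<close> there and vanishes on the remainder.
  Where it exceeds \<open>1/2\<close> it cuts out a cozero-set \<open>C\<close> of \<open>X\<close> whose closure is a closed
  subspace of \<open>Y\<close>, hence has \<open>P\<close>, and the point lies in the interior of the closure of
  \<open>C\<close> in \<open>\<beta>X\<close>. This gives both local-\<open>P\<close> and the inclusion.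

  Conversely, compactness of \<open>\<beta>X\<close> covers every closed subset of \<open>Y\<close> missing the remainder
  by finitely many closures of cozero-sets with \<open>P\<close>, so it has \<open>P\<close>. Collapsing the remainder
  to a point \<open>p\<close> is a perfect map onto a Tychonoff space in which the complement of every
  neighbourhood of \<open>p\<close> has \<open>P\<close>; condition (W) and inverse invariance under perfect maps
  give \<open>P\<close> for \<open>Y\<close>.
\<close>

section \<open>Disjoint sums of closed subspaces\<close>

lemma tychonoff_subtopology: "tychonoff X \<Longrightarrow> tychonoff (subtopology X S)"
  by (simp add: tychonoff_def completely_regular_space_subtopology Hausdorff_space_subtopology)

lemma tychonoff_homeomorphic_space: "X homeomorphic_space Y \<Longrightarrow> tychonoff X \<longleftrightarrow> tychonoff Y"
  by (simp add: tychonoff_def homeomorphic_completely_regular_space homeomorphic_Hausdorff_space)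

lemma tychonoff_finite_imp_clopen:
  assumes "finite (UNIV::'a set)" "tychonoff (S::'a topology)" "U \<subseteq> topspace S"
  shows "closedin S U" "openin S U"
proof -
  have "S = discrete_topology (topspace S)"
    by (rule finite_topspace_imp_discrete_topology[OF refl])
       (use assms in \<open>auto simp: tychonoff_def intro: finite_subset\<close>)
  then show "closedin S U" "openin S U"
    using assms(3) by (metis closedin_discrete_topology openin_discrete_topology)+
qed

lemma infinite_imp_inj_prod_bool:
  assumes "infinite (UNIV::'a set)" shows "\<exists>e::'a \<times> bool \<Rightarrow> 'a. inj e"
proof -
  have "ordIso2 (card_of ((UNIV::'a set) <+> (UNIV::'a set))) (card_of (UNIV::'a set))"
    by (rule card_of_Plus_infinite1) (use assms card_of_mono1 in auto)
  then obtain f where f: "bij_betw f ((UNIV::'a set) <+> (UNIV::'a set)) (UNIV::'a set)"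
    using card_of_ordIso by blast
  have "inj (\<lambda>(x, b). f (if b then Inr x else Inl x))"
    using f unfolding bij_betw_def inj_on_def by (auto split: if_splits)
  then show ?thesis by blast
qed

lemma homeomorphic_map_pullback_inv_into:
  assumes e: "inj_on e (topspace M)"
  shows "homeomorphic_map M (pullback_topology (e ` topspace M) (inv_into (topspace M) e) M) e"
    (is "homeomorphic_map M ?W e")
proof -
  have "continuous_map M ?W e"
  proof (rule continuous_map_pullback')
    show "continuous_map M M (inv_into (topspace M) e \<circ> e)"
      by (rule continuous_map_eq[OF continuous_map_id]) (simp add: e)
  qed auto
  moreover have "continuous_map ?W M (inv_into (topspace M) e)"
    using continuous_map_pullback[OF continuous_map_id] by (simp add: o_def)
  ultimately have "homeomorphic_maps M ?W e (inv_into (topspace M) e)"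
    unfolding homeomorphic_maps_def
    by (auto simp: e topspace_pullback_topology f_inv_into_f)
  then show ?thesis
    using homeomorphic_maps_map by blast
qed

lemma homeomorphic_space_subtopology_Times_sing:
  assumes "b \<in> topspace T"
  shows "subtopology S A homeomorphic_space subtopology (prod_topology S T) (A \<times> {b})"
  using homeomorphic_space_prod_topology_sing1[OF assms, of "subtopology S A"]
  by (simp add: subtopology_Times)

lemma perfect_map_fst_closed_cover:
  assumes A1: "closedin S A1" and A2: "closedin S A2" and cover: "A1 \<union> A2 = topspace S"
  shows "perfect_map (subtopology (prod_topology S (discrete_topology UNIV)) (A1 \<times> {False} \<union> A2 \<times> {True})) S fst"
    (is "perfect_map ?M S fst")
proof -
  define PT where "PT = prod_topology S (discrete_topology (UNIV::bool set))"
  have tM: "topspace ?M = A1 \<times> {False} \<union> A2 \<times> {True}"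
    using A1 A2 closedin_subset by fastforce
  have "closedin PT (A1 \<times> {False} \<union> A2 \<times> {True})"
    using A1 A2 by (simp add: PT_def closedin_Un closedin_prod_Times_iff)
  then have "closed_map ?M S fst"
    using closed_map_compose[OF closed_map_inclusion, of PT _ S fst]
    by (simp add: PT_def closed_map_fst compact_space_discrete_topology)
  moreover have "compactin ?M {x \<in> topspace ?M. fst x = y}" for y
    by (rule finite_imp_compactin) (auto intro: finite_subset[of _ "{(y, False), (y, True)}"])
  moreover have "continuous_map ?M S fst"
    by (simp add: continuous_map_from_subtopology continuous_map_fst)
  moreover have "fst ` topspace ?M = topspace S"
    unfolding tM image_Un using cover by auto
  ultimately show ?thesis
    by (simp add: perfect_map_def proper_map_def)
qed

lemma closed_cover_disjoint_sum:
  fixes S :: "'a topology"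
  assumes S: "tychonoff S" and A1: "closedin S A1" and A2: "closedin S A2"
    and cover: "A1 \<union> A2 = topspace S"
  defines "M \<equiv> subtopology (prod_topology S (discrete_topology UNIV)) (A1 \<times> {False} \<union> A2 \<times> {True})"
  shows "tychonoff M" "perfect_map M S fst"
    "closedin M (A1 \<times> {False})" "openin M (A1 \<times> {False})"
    "subtopology S A1 homeomorphic_space subtopology M (A1 \<times> {False})"
    "subtopology S A2 homeomorphic_space subtopology M (topspace M - A1 \<times> {False})"
proof -
  define PT where "PT = prod_topology S (discrete_topology (UNIV::bool set))"
  have M: "M = subtopology PT (A1 \<times> {False} \<union> A2 \<times> {True})"
    by (simp add: M_def PT_def)
  have "tychonoff PT"
    using S unfolding tychonoff_def PT_def
    by (simp add: completely_regular_space_prod_topology Hausdorff_space_prod_topology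
        completely_regular_space_discrete_topology Hausdorff_space_discrete_topology)
  then show "tychonoff M"
    unfolding M by (rule tychonoff_subtopology)
  have closed_piece: "closedin PT (A \<times> {b})" if "closedin S A" for A b
    using that by (simp add: PT_def closedin_prod_Times_iff)
  have piece: "subtopology S A homeomorphic_space subtopology M (A \<times> {b})"
    if "A \<times> {b} \<subseteq> A1 \<times> {False} \<union> A2 \<times> {True}" for A b
    using that homeomorphic_space_subtopology_Times_sing[of b "discrete_topology UNIV" S A]
    by (simp add: M PT_def subtopology_subtopology Int_absorb1)
  have tM: "topspace M = A1 \<times> {False} \<union> A2 \<times> {True}"
    using A1 A2 closedin_subset unfolding M_def by fastforce
  show "perfect_map M S fst"
    unfolding M_def by (rule perfect_map_fst_closed_cover[OF A1 A2 cover])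
  show "closedin M (A1 \<times> {False})"
    unfolding M by (rule closedin_subset_topspace[OF closed_piece[OF A1]]) blast
  have "openin PT (topspace S \<times> {False})"
    by (simp add: PT_def openin_prod_Times_iff)
  then have "openin M ((A1 \<times> {False} \<union> A2 \<times> {True}) \<inter> (topspace S \<times> {False}))"
    unfolding M by (rule openin_subtopology_Int2)
  moreover have "(A1 \<times> {False} \<union> A2 \<times> {True}) \<inter> (topspace S \<times> {False}) = A1 \<times> {False}"
    using A1 closedin_subset by blast
  ultimately show "openin M (A1 \<times> {False})"
    by simp
  show "subtopology S A1 homeomorphic_space subtopology M (A1 \<times> {False})"
    by (rule piece) blast
  have "topspace M - A1 \<times> {False} = A2 \<times> {True}"
    using tM by blast
  then show "subtopology S A2 homeomorphic_space subtopology M (topspace M - A1 \<times> {False})"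
    using piece[of A2 True] by auto
qed

text \<open>Compactness-like properties only speak about spaces on the type \<open>'a\<close>, so the disjoint sum
  is carried back into \<open>'a\<close> along an injection \<open>'a \<times> bool \<Rightarrow> 'a\<close>; this needs \<open>'a\<close> to be
  infinite.\<close>

lemma closed_cover_as_clopen_partition:
  fixes S :: "'a topology"
  assumes inf: "infinite (UNIV::'a set)" and S: "tychonoff S"
    and A1: "closedin S A1" and A2: "closedin S A2" and cover: "A1 \<union> A2 = topspace S"
  obtains W :: "'a topology" and g W1 where "tychonoff W" "perfect_map W S g"
    "closedin W W1" "openin W W1"
    "subtopology S A1 homeomorphic_space subtopology W W1"
    "subtopology S A2 homeomorphic_space subtopology W (topspace W - W1)"
proof -
  define M where "M = subtopology (prod_topology S (discrete_topology UNIV)) (A1 \<times> {False} \<union> A2 \<times> {True})"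
  note M = closed_cover_disjoint_sum[OF S A1 A2 cover, folded M_def]
  obtain e :: "'a \<times> bool \<Rightarrow> 'a" where "inj e"
    using infinite_imp_inj_prod_bool[OF inf] by blast
  then have e: "inj_on e (topspace M)"
    by (rule inj_on_subset) simp
  define W where "W = pullback_topology (e ` topspace M) (inv_into (topspace M) e) M"
  have h: "homeomorphic_map M W e"
    unfolding W_def by (rule homeomorphic_map_pullback_inv_into[OF e])
  have sub: "subtopology M U homeomorphic_space subtopology W (e ` U)" if "U \<subseteq> topspace M" for U
  proof (rule homeomorphic_map_imp_homeomorphic_space)
    show "homeomorphic_map (subtopology M U) (subtopology W (e ` U)) e"
      by (rule homeomorphic_map_subtopologies[OF h]) (use that homeomorphic_imp_surjective_map[OF h] in auto)
  qed
  obtain g where "homeomorphic_maps M W e g"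
    using h homeomorphic_map_maps by blast
  show thesis
  proof (rule that)
    show "perfect_map W S (fst \<circ> g)"
      using \<open>homeomorphic_maps M W e g\<close> homeomorphic_maps_map
      by (blast intro: perfect_map_compose[OF homeomorphic_imp_perfect_map M(2)])
    show "tychonoff W"
      using M(1) h homeomorphic_map_imp_homeomorphic_space tychonoff_homeomorphic_space by blast
    have A1: "A1 \<times> {False} \<subseteq> topspace M"
      using closedin_subset[OF M(3)] .
    show "closedin W (e ` (A1 \<times> {False}))" "openin W (e ` (A1 \<times> {False}))"
      using M(3,4) homeomorphic_map_closedness[OF h A1] homeomorphic_map_openness[OF h A1] by simp_all
    show "subtopology S A1 homeomorphic_space subtopology W (e ` (A1 \<times> {False}))"
      using M(5) sub[OF A1] by (rule homeomorphic_space_trans)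
    have "e ` (topspace M - A1 \<times> {False}) = topspace W - e ` (A1 \<times> {False})"
      using inj_on_image_set_diff[OF e _ A1] homeomorphic_imp_surjective_map[OF h] by simp
    then show "subtopology S A2 homeomorphic_space subtopology W (topspace W - e ` (A1 \<times> {False}))"
      using M(6) sub[of "topspace M - A1 \<times> {False}"] by (metis Diff_subset homeomorphic_space_trans)
  qed
qed

section \<open>Collapsing a compact set to a point\<close>

definition quotient_topology :: "'a topology \<Rightarrow> ('a \<Rightarrow> 'b) \<Rightarrow> 'b topology" where
  "quotient_topology X f = topology (\<lambda>U. U \<subseteq> f ` topspace X \<and> openin X {x \<in> topspace X. f x \<in> U})"

lemma openin_quotient_topology:
  "openin (quotient_topology X f) U \<longleftrightarrow> U \<subseteq> f ` topspace X \<and> openin X {x \<in> topspace X. f x \<in> U}"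
proof -
  have Int: "{x \<in> topspace X. f x \<in> S \<inter> T} = {x \<in> topspace X. f x \<in> S} \<inter> {x \<in> topspace X. f x \<in> T}"
    for S T by blast
  have Union: "{x \<in> topspace X. f x \<in> \<Union>\<K>} = (\<Union>S\<in>\<K>. {x \<in> topspace X. f x \<in> S})"
    for \<K> by blast
  have "istopology (\<lambda>U. U \<subseteq> f ` topspace X \<and> openin X {x \<in> topspace X. f x \<in> U})"
    unfolding istopology_def Int Union by (auto intro!: openin_Int openin_Union)
  then show ?thesis
    by (simp add: quotient_topology_def)
qed

lemma topspace_quotient_topology: "topspace (quotient_topology X f) = f ` topspace X"
proof
  show "topspace (quotient_topology X f) \<subseteq> f ` topspace X"
    using openin_quotient_topology[of X f "topspace (quotient_topology X f)"] by simp
  have "{x \<in> topspace X. f x \<in> f ` topspace X} = topspace X"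
    by blast
  then have "openin (quotient_topology X f) (f ` topspace X)"
    by (simp add: openin_quotient_topology)
  then show "f ` topspace X \<subseteq> topspace (quotient_topology X f)"
    by (rule openin_subset)
qed

lemma quotient_map_quotient_topology: "quotient_map X (quotient_topology X f) f"
  by (simp add: quotient_map_def topspace_quotient_topology openin_quotient_topology)

definition collapse_map :: "'a set \<Rightarrow> 'a \<Rightarrow> 'a \<Rightarrow> 'a" where
  "collapse_map K p y = (if y \<in> K then p else y)"

context
  fixes Y :: "'a topology" and K :: "'a set" and p :: 'a
  assumes K_closed: "closedin Y K" and K_compact: "compactin Y K" and p: "p \<in> K"
begin

abbreviation collapse_topology :: "'a topology" where
  "collapse_topology \<equiv> quotient_topology Y (collapse_map K p)"

lemma topspace_collapse_topology: "topspace collapse_topology = topspace Y - K \<union> {p}"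
  using closedin_subset[OF K_closed] p
  by (auto simp: topspace_quotient_topology collapse_map_def)

lemma closedin_collapse_topology:
  "closedin collapse_topology C \<longleftrightarrow> C \<subseteq> topspace Y - K \<union> {p} \<and> closedin Y {y \<in> topspace Y. collapse_map K p y \<in> C}"
proof -
  have "closedin Y {y \<in> topspace Y. collapse_map K p y \<in> U} \<longleftrightarrow> closedin collapse_topology U"
    if "U \<subseteq> topspace collapse_topology" for U
    using quotient_map_quotient_topology[of Y "collapse_map K p", unfolded quotient_map_closedin] that by blast
  then show ?thesis
    unfolding topspace_collapse_topology[symmetric] using closedin_subset by blast
qed

lemma collapse_map_fibre:
  "{y \<in> topspace Y. collapse_map K p y = s} = (if s = p then K else topspace Y \<inter> {s} - K)"
  using closedin_subset[OF K_closed] p unfolding collapse_map_def by auto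

lemma collapse_map_saturation:
  assumes "C \<subseteq> topspace Y"
  shows "{y \<in> topspace Y. collapse_map K p y \<in> collapse_map K p ` C} = (if C \<inter> K = {} then C else C \<union> K)"
proof (cases "C \<inter> K = {}")
  case True
  have "collapse_map K p y \<in> collapse_map K p ` C \<longleftrightarrow> y \<in> C" if "y \<in> topspace Y" for y
    using True p unfolding collapse_map_def by (cases "y \<in> K") (auto simp: image_iff)
  then show ?thesis
    using True assms by auto
next
  case False
  then have "p \<in> collapse_map K p ` C"
    unfolding collapse_map_def by force
  moreover have "collapse_map K p y \<in> collapse_map K p ` C \<longleftrightarrow> y \<in> C \<or> y \<in> K" if "y \<in> topspace Y" for y
    using False p calculation unfolding collapse_map_def by (cases "y \<in> K") (auto simp: image_iff)
  ultimately show ?thesis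
    using False assms closedin_subset[OF K_closed] by auto
qed

lemma perfect_map_collapse: "perfect_map Y collapse_topology (collapse_map K p)"
  unfolding perfect_map_def proper_map_def
proof (intro conjI ballI)
  show "continuous_map Y collapse_topology (collapse_map K p)"
    by (rule quotient_imp_continuous_map[OF quotient_map_quotient_topology])
  show "collapse_map K p ` topspace Y = topspace collapse_topology"
    by (rule quotient_imp_surjective_map[OF quotient_map_quotient_topology])
  show "closed_map Y collapse_topology (collapse_map K p)"
    unfolding closed_map_def closedin_collapse_topology
  proof (intro allI impI conjI)
    fix C assume C: "closedin Y C"
    show "collapse_map K p ` C \<subseteq> topspace Y - K \<union> {p}"
      using closedin_subset[OF C] unfolding collapse_map_def by auto
    show "closedin Y {y \<in> topspace Y. collapse_map K p y \<in> collapse_map K p ` C}"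
      using C K_closed by (simp add: collapse_map_saturation closedin_subset closedin_Un)
  qed
  fix s
  have "compactin Y (topspace Y \<inter> {s} - K)"
    by (rule finite_imp_compactin) auto
  then show "compactin Y {y \<in> topspace Y. collapse_map K p y = s}"
    using collapse_map_fibre[of s] K_compact by (simp split: if_splits)
qed

lemma subtopology_collapse_topology:
  assumes "D \<subseteq> topspace Y - K"
  shows "subtopology collapse_topology D = subtopology Y D"
proof -
  \<comment> \<open>On the open saturated set \<open>Y - K\<close> the collapse map is the identity and still a quotient map.\<close>
  have pre: "{y \<in> topspace Y. collapse_map K p y \<in> topspace Y - K} = topspace Y - K"
    using p unfolding collapse_map_def by auto
  have "topspace Y - K \<subseteq> collapse_map K p ` topspace Y"
    using topspace_collapse_topology by (auto simp: topspace_quotient_topology)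
  then have "openin collapse_topology (topspace Y - K)"
    using pre K_closed by (simp add: openin_quotient_topology openin_diff)
  then have "quotient_map (subtopology Y (topspace Y - K)) (subtopology collapse_topology (topspace Y - K)) (collapse_map K p)"
    using quotient_map_restriction[OF quotient_map_quotient_topology pre] by blast
  then have "quotient_map (subtopology Y (topspace Y - K)) (subtopology collapse_topology (topspace Y - K)) id"
    by (rule quotient_map_eq) (simp add: collapse_map_def)
  then have "subtopology collapse_topology (topspace Y - K) = subtopology Y (topspace Y - K)"
    by (simp flip: homeomorphic_map_id add: homeomorphic_map_def)
  then show ?thesis
    using assms by (metis Int_absorb1 subtopology_subtopology)
qed

lemma closedin_collapse_topology_avoiding_point:
  assumes D: "closedin collapse_topology D" and "p \<notin> D"
  shows "closedin Y D" "D \<inter> K = {}" "subtopology collapse_topology D = subtopology Y D"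
proof -
  have DK: "D \<subseteq> topspace Y - K"
    using closedin_subset[OF D] assms(2) by (auto simp: topspace_collapse_topology)
  then show "D \<inter> K = {}"
    by blast
  have "{y \<in> topspace Y. collapse_map K p y \<in> D} = D"
    using DK p assms(2) by (auto simp: collapse_map_def)
  then show "closedin Y D"
    using D closedin_collapse_topology by simp
  show "subtopology collapse_topology D = subtopology Y D"
    by (rule subtopology_collapse_topology[OF DK])
qed

lemma continuous_map_collapse_topology:
  assumes f: "continuous_map Y T f" and const: "\<And>y. y \<in> K \<Longrightarrow> f y = f p"
  shows "continuous_map collapse_topology T f"
proof (rule continuous_compose_quotient_map[OF quotient_map_quotient_topology])
  show "continuous_map Y T (f \<circ> collapse_map K p)"
    by (rule continuous_map_eq[OF f]) (simp add: const collapse_map_def)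
qed

lemma collapse_topology_separating_sets:
  assumes C: "closedin collapse_topology C" and x: "x \<in> topspace collapse_topology - C"
  obtains E D where "compactin Y E" "closedin Y D" "disjnt D E" "x \<in> E" "C \<subseteq> D"
    "K \<subseteq> E \<or> K \<subseteq> D"
proof -
  define D' where "D' = {y \<in> topspace Y. collapse_map K p y \<in> C}"
  have D': "closedin Y D'"
    using C unfolding D'_def closedin_collapse_topology by blast
  have "C \<subseteq> topspace Y - K \<union> {p}"
    using C closedin_collapse_topology by blast
  then have CD': "C \<subseteq> D'"
    using closedin_subset[OF K_closed] p unfolding D'_def collapse_map_def by auto
  show thesis
  proof (cases "x = p")
    case True
    then have "disjnt D' K"
      using x unfolding D'_def collapse_map_def disjnt_def by auto
    then show thesis
      using that[of K D'] True K_compact D' p CD' by blast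
  next
    case False
    then have "x \<in> topspace Y - K"
      using x topspace_collapse_topology by auto
    moreover have "x \<notin> D'"
      using x calculation unfolding D'_def collapse_map_def by auto
    ultimately show thesis
      using that[of "{x}" "D' \<union> K"] D' K_closed CD' by (auto simp: closedin_Un disjnt_def)
  qed
qed

lemma completely_regular_space_collapse_topology:
  assumes Y: "completely_regular_space Y"
  shows "completely_regular_space collapse_topology"
  unfolding completely_regular_space_def
proof (intro allI impI, elim conjE)
  fix C x assume "closedin collapse_topology C" "x \<in> topspace collapse_topology - C"
  then obtain E D where ED: "compactin Y E" "closedin Y D" "disjnt D E" "x \<in> E" "C \<subseteq> D"
    and KED: "K \<subseteq> E \<or> K \<subseteq> D"
    by (rule collapse_topology_separating_sets)
  obtain f where f: "continuous_map Y (top_of_set {0..1::real}) f" "f ` E \<subseteq> {0}" "f ` D \<subseteq> {1}"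
    using Urysohn_completely_regular_closed_compact[of 0 1 Y D E] ED Y by auto
  have fE: "f y = 0" if "y \<in> E" for y
    using f(2) that by blast
  have fD: "f y = 1" if "y \<in> D" for y
    using f(3) that by blast
  have "f y = f p" if "y \<in> K" for y
    using KED that p fE fD by (elim disjE) (simp_all add: subset_iff)
  then have "continuous_map collapse_topology (top_of_set {0..1}) f"
    by (rule continuous_map_collapse_topology[OF f(1)])
  moreover have "f x = 0" "f ` C \<subseteq> {1}"
    using ED(4,5) fE fD by auto
  ultimately show "\<exists>f. continuous_map collapse_topology (top_of_set {0..1::real}) f \<and> f x = 0 \<and> f ` C \<subseteq> {1}"
    by (intro exI[of _ f] conjI)
qed

lemma t1_space_collapse_topology:
  assumes Y: "t1_space Y"
  shows "t1_space collapse_topology"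
  unfolding t1_space_closedin_singleton closedin_collapse_topology
proof (intro ballI conjI)
  fix s assume "s \<in> topspace collapse_topology"
  then show "{s} \<subseteq> topspace Y - K \<union> {p}"
    by (simp add: topspace_collapse_topology)
  have "topspace Y \<inter> {s} - K = (if s \<in> topspace Y - K then {s} else {})"
    by auto
  then have "closedin Y (topspace Y \<inter> {s} - K)"
    using Y by (simp add: t1_space_closedin_singleton)
  then show "closedin Y {y \<in> topspace Y. collapse_map K p y \<in> {s}}"
    using K_closed by (simp add: collapse_map_fibre)
qed

lemma tychonoff_collapse_topology: "tychonoff Y \<Longrightarrow> tychonoff collapse_topology"
  by (simp add: tychonoff_def completely_regular_space_collapse_topology t1_space_collapse_topology
      Hausdorff_imp_t1_space completely_regular_imp_regular_space regular_t1_imp_Hausdorff_space)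

end

section \<open>Extensions and cozero-sets\<close>

lemma compactification_imp_tychonoff:
  assumes "is_compactification Y Z"
  shows "tychonoff Z" "tychonoff Y"
proof -
  show Z: "tychonoff Z"
    using assms unfolding is_compactification_def tychonoff_def
    by (simp add: compact_Hausdorff_or_regular_imp_normal_space normal_imp_completely_regular_space)
  show "tychonoff Y"
    using tychonoff_subtopology[OF Z, of "topspace Y"] assms
    by (simp add: is_compactification_def is_extension_def)
qed

lemma compactin_remainder_compactification:
  assumes "compact_remainder X Y" "is_compactification Y Z"
  shows "compactin Z (topspace Y - topspace X)"
  using assms compactin_subtopology[of Z "topspace Y"]
  by (simp add: compact_remainder_def is_compactification_def is_extension_def)

lemma tychonoff_separate_point_compactin:
  assumes "tychonoff Z" "compactin Z K" "z \<in> topspace Z - K"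
  obtains f where "continuous_map Z euclideanreal f" "f ` K \<subseteq> {0}" "f z = 1"
proof -
  have "closedin Z {z}" "disjnt K {z}"
    using assms closedin_Hausdorff_singleton by (auto simp: tychonoff_def)
  then obtain f where "continuous_map Z euclideanreal f" "f ` {z} \<subseteq> {1}" "f ` K \<subseteq> {0::real}"
    using Urysohn_completely_regular_compact_closed_alt[of Z K "{z}"] assms(1,2)
    by (auto simp: tychonoff_def)
  then show thesis
    using that by simp
qed

lemma Coz_superlevel_set:
  assumes "continuous_map X euclideanreal f"
  shows "{x \<in> topspace X. a < f x} \<in> Coz X"
proof -
  define g where "g x = max (f x - a) 0" for x
  have "continuous_map X euclideanreal g"
    unfolding g_def by (intro continuous_map_real_max continuous_map_diff assms) simp_all
  moreover have "{x \<in> topspace X. a < f x} = {x \<in> topspace X. g x \<noteq> 0}"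
    by (auto simp: g_def)
  ultimately show ?thesis
    unfolding Coz_def by blast
qed

lemma subtopology_closure_of_subtopology:
  assumes "C \<subseteq> S" "Y closure_of C \<subseteq> S"
  shows "subtopology (subtopology Y S) (subtopology Y S closure_of C) = subtopology Y (Y closure_of C)"
proof -
  have "subtopology Y S closure_of C = Y closure_of C"
    using assms by (simp add: closure_of_subtopology Int_absorb1 Int_absorb2)
  moreover have "S \<inter> Y closure_of C = Y closure_of C"
    using assms(2) by blast
  ultimately show ?thesis
    by (simp add: subtopology_subtopology)
qed

lemma openin_subset_interior_closure_of_dense:
  assumes "openin B U" "B closure_of S = topspace B" "U \<inter> S \<subseteq> C"
  shows "U \<subseteq> B interior_of (B closure_of C)"
proof (rule interior_of_maximal[OF _ assms(1)])
  have "U = U \<inter> B closure_of S"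
    using assms(1,2) openin_subset by blast
  also have "\<dots> \<subseteq> B closure_of (U \<inter> S)"
    by (rule openin_Int_closure_of_subset[OF assms(1)])
  also have "\<dots> \<subseteq> B closure_of C"
    by (rule closure_of_mono[OF assms(3)])
  finally show "U \<subseteq> B closure_of C" .
qed

lemma subtopology_closure_of_superlevel_set:
  assumes Y: "is_extension X Y" and f: "continuous_map Y euclideanreal f"
    and f0: "f ` (topspace Y - topspace X) \<subseteq> {0}" and "0 < a"
  defines "C \<equiv> {x \<in> topspace X. a < f x}"
  shows "subtopology X (X closure_of C) = subtopology Y (Y closure_of C)"
proof -
  have XY: "topspace X \<subseteq> topspace Y" "subtopology Y (topspace X) = X"
    using Y unfolding is_extension_def by auto
  have "closedin Y {y \<in> topspace Y. f y \<in> {a..}}"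
    by (rule closedin_continuous_map_preimage[OF f]) simp
  moreover have "C \<subseteq> {y \<in> topspace Y. f y \<in> {a..}}"
    using XY by (auto simp: C_def)
  ultimately have "Y closure_of C \<subseteq> {y \<in> topspace Y. f y \<in> {a..}}"
    by (rule closure_of_minimal[rotated])
  also have "\<dots> \<subseteq> topspace X"
    using f0 \<open>0 < a\<close> by (force simp: image_subset_iff)
  finally show ?thesis
    using subtopology_closure_of_subtopology[of C "topspace X" Y] XY(2) by (simp add: C_def)
qed

lemma lambda_P_finite_subcover:
  assumes "compactin B S" "S \<subseteq> lambda_P Q X B"
  obtains \<C> where "finite \<C>" "\<And>C. C \<in> \<C> \<Longrightarrow> C \<in> Coz X \<and> Q (subtopology X (X closure_of C))"
    "S \<subseteq> (\<Union>C\<in>\<C>. B interior_of (B closure_of C))"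
proof -
  define \<C>\<^sub>0 where "\<C>\<^sub>0 = {C. C \<in> Coz X \<and> Q (subtopology X (X closure_of C))}"
  define \<U> where "\<U> = (\<lambda>C. B interior_of (B closure_of C)) ` \<C>\<^sub>0"
  have "S \<subseteq> \<Union>\<U>"
    using assms(2) unfolding lambda_P_def \<U>_def \<C>\<^sub>0_def by blast
  moreover have "\<forall>U\<in>\<U>. openin B U"
    unfolding \<U>_def by simp
  ultimately have "\<exists>\<F>. finite \<F> \<and> \<F> \<subseteq> \<U> \<and> S \<subseteq> \<Union>\<F>"
    using assms(1) unfolding compactin_def by blast
  then obtain \<F> where "finite \<F>" "\<F> \<subseteq> \<U>" "S \<subseteq> \<Union>\<F>"
    by blast
  then obtain \<C> where "\<C> \<subseteq> \<C>\<^sub>0" "finite \<C>" "\<F> = (\<lambda>C. B interior_of (B closure_of C)) ` \<C>"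
    using finite_subset_image[of \<F> _ \<C>\<^sub>0] unfolding \<U>_def by blast
  then show thesis
    using that \<open>S \<subseteq> \<Union>\<F>\<close> unfolding \<C>\<^sub>0_def by blast
qed

lemma closedin_off_remainder_compact_superset:
  assumes Z: "is_compactification Y Z" and B: "is_stone_cech X B"
    and \<phi>: "continuous_map B Z \<phi>" and \<phi>_id: "\<forall>x\<in>topspace X. \<phi> x = x"
    and H: "topspace B - lambda_P Q X B \<subseteq> {b \<in> topspace B. \<phi> b \<in> topspace Y - topspace X}"
    and F: "closedin Y F" and FX: "F \<subseteq> topspace X"
  obtains S where "compactin B S" "F \<subseteq> S" "S \<subseteq> lambda_P Q X B"
proof -
  have "subtopology Z (topspace Y) = Y"
    using Z by (simp add: is_compactification_def is_extension_def)
  then have "openin (subtopology Z (topspace Y)) (topspace Y - F)"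
    using F by (simp add: openin_diff)
  then obtain V where V: "openin Z V" "topspace Y - F = V \<inter> topspace Y"
    unfolding openin_subtopology by blast
  define U where "U = {b \<in> topspace B. \<phi> b \<in> V}"
  have "openin B U"
    unfolding U_def by (rule openin_continuous_map_preimage[OF \<phi> V(1)])
  moreover have "compact_space B"
    using B by (simp add: is_stone_cech_def is_compactification_def)
  ultimately have "compactin B (topspace B - U)"
    by (intro closedin_compact_space) blast+
  moreover have "topspace B - U \<subseteq> lambda_P Q X B"
    using H V(2) FX by (auto simp: U_def)
  moreover have "\<phi> x = x" "x \<notin> V" if "x \<in> F" for x
    using that FX \<phi>_id V(2) closedin_subset[OF F] by blast+
  then have "F \<subseteq> topspace B - U"
    using FX B by (auto simp: U_def is_stone_cech_def is_compactification_def is_extension_def)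
  ultimately show thesis
    using that by blast
qed

lemma closedin_off_remainder_finite_cover:
  assumes Z: "is_compactification Y Z" and B: "is_stone_cech X B"
    and \<phi>: "continuous_map B Z \<phi>" and \<phi>_id: "\<forall>x\<in>topspace X. \<phi> x = x"
    and H: "topspace B - lambda_P Q X B \<subseteq> {b \<in> topspace B. \<phi> b \<in> topspace Y - topspace X}"
    and F: "closedin Y F" and FX: "F \<subseteq> topspace X"
  obtains \<C> where "finite \<C>" "\<And>C. C \<in> \<C> \<Longrightarrow> C \<in> Coz X \<and> Q (subtopology X (X closure_of C))"
    "F \<subseteq> (\<Union>C\<in>\<C>. X closure_of C)"
proof -
  obtain S where S: "compactin B S" "F \<subseteq> S" "S \<subseteq> lambda_P Q X B"
    by (rule closedin_off_remainder_compact_superset[OF Z B \<phi> \<phi>_id H F FX])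
  then obtain \<C> where \<C>: "finite \<C>"
    "\<And>C. C \<in> \<C> \<Longrightarrow> C \<in> Coz X \<and> Q (subtopology X (X closure_of C))"
    "S \<subseteq> (\<Union>C\<in>\<C>. B interior_of (B closure_of C))"
    using lambda_P_finite_subcover by metis
  have XB: "subtopology B (topspace X) = X"
    using B by (simp add: is_stone_cech_def is_compactification_def is_extension_def)
  have "F \<subseteq> (\<Union>C\<in>\<C>. X closure_of C)"
  proof
    fix x assume x: "x \<in> F"
    then obtain C where C: "C \<in> \<C>" "x \<in> B interior_of (B closure_of C)"
      using S(2) \<C>(3) by blast
    have "C \<subseteq> topspace X"
      using \<C>(2)[OF C(1)] by (auto simp: Coz_def)
    then have "X closure_of C = topspace X \<inter> B closure_of C"
      using closure_of_subtopology[of B "topspace X" C] XB by (simp add: Int_absorb1)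
    moreover have "x \<in> B closure_of C"
      using C(2) interior_of_subset[of B "B closure_of C"] by blast
    ultimately show "x \<in> (\<Union>C\<in>\<C>. X closure_of C)"
      using x FX C(1) by blast
  qed
  then show thesis
    using that \<C>(1,2) by blast
qed

section \<open>Compactness-like properties\<close>

context
  fixes P :: "'a topology \<Rightarrow> bool"
  assumes P: "compactness_like P"
begin

lemma compactness_like_clopen:
  assumes "tychonoff S" "P S" "closedin S A" "openin S A"
  shows "P (subtopology S A)"
proof -
  have "\<forall>S A. tychonoff S \<and> P S \<and> closedin S A \<and> openin S A \<longrightarrow> P (subtopology S A)"
    using P unfolding compactness_like_def by (elim conjE)
  then show ?thesis
    using assms by blast
qed

lemma compactness_like_disjoint_Union:
  assumes "tychonoff S" "finite \<A>" "\<Union>\<A> = topspace S" "disjoint \<A>"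
    and "\<And>A. A \<in> \<A> \<Longrightarrow> closedin S A \<and> P (subtopology S A)"
  shows "P S"
proof -
  have "\<forall>S \<A>. tychonoff S \<and> finite \<A> \<and> \<Union>\<A> = topspace S \<and> disjoint \<A> \<and>
          (\<forall>A\<in>\<A>. closedin S A \<and> P (subtopology S A)) \<longrightarrow> P S"
    using P unfolding compactness_like_def by (elim conjE)
  then show ?thesis
    using assms by blast
qed

lemma compactness_like_perfect_map:
  assumes "tychonoff S" "tychonoff T" "perfect_map S T f"
  shows "P S \<longleftrightarrow> P T"
proof -
  have "\<forall>S T f. tychonoff S \<and> tychonoff T \<and> perfect_map S T f \<longrightarrow> (P S \<longleftrightarrow> P T)"
    using P unfolding compactness_like_def by (elim conjE)
  then show ?thesis
    using assms by blast
qed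

lemma compactness_like_mrowka_W: "mrowka_W P"
  using P unfolding compactness_like_def by (elim conjE)

lemma compactness_like_homeomorphic_space:
  assumes "tychonoff S" "S homeomorphic_space T"
  shows "P S \<longleftrightarrow> P T"
proof -
  obtain f where "homeomorphic_map S T f"
    using assms(2) homeomorphic_space by blast
  then show ?thesis
    using assms compactness_like_perfect_map homeomorphic_imp_perfect_map tychonoff_homeomorphic_space
    by blast
qed

lemma compactness_like_empty: "tychonoff S \<Longrightarrow> P (subtopology S {})"
  by (rule compactness_like_disjoint_Union[of _ "{}"]) (use tychonoff_subtopology[of S "{}"] in simp_all)

lemma compactness_like_clopen_partition:
  assumes W: "tychonoff W" and "closedin W W1" "openin W W1"
    and "P (subtopology W W1)" "P (subtopology W (topspace W - W1))"
  shows "P W"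
proof (rule compactness_like_disjoint_Union[OF W, of "{W1, topspace W - W1}"])
  show "\<Union>{W1, topspace W - W1} = topspace W" "disjoint {W1, topspace W - W1}"
    using closedin_subset[OF assms(2)] by (auto simp: pairwise_def disjnt_def)
qed (use assms closedin_diff[OF closedin_topspace assms(3)] in auto)

lemma compactness_like_closedin:
  assumes S: "tychonoff S" and "P S" and A: "closedin S A"
  shows "P (subtopology S A)"
proof (cases "finite (UNIV::'a set)")
  case True
  then show ?thesis
    using compactness_like_clopen[OF S \<open>P S\<close> A] tychonoff_finite_imp_clopen[OF True S closedin_subset[OF A]]
    by blast
next
  case False
  obtain W :: "'a topology" and g W1 where W: "tychonoff W" "perfect_map W S g"
    "closedin W W1" "openin W W1" "subtopology S A homeomorphic_space subtopology W W1"
    by (rule closed_cover_as_clopen_partition[OF False S A closedin_topspace])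
       (use closedin_subset[OF A] in auto)
  have "P W"
    using compactness_like_perfect_map[OF W(1) S W(2)] \<open>P S\<close> by blast
  then have "P (subtopology W W1)"
    using compactness_like_clopen W(1,3,4) by blast
  then show ?thesis
    using compactness_like_homeomorphic_space[OF tychonoff_subtopology[OF S] W(5)] by blast
qed

lemma compactness_like_closedin_Un:
  assumes S: "tychonoff S" and A1: "closedin S A1" and A2: "closedin S A2"
    and P1: "P (subtopology S A1)" and P2: "P (subtopology S A2)"
  shows "P (subtopology S (A1 \<union> A2))"
proof -
  define T where "T = subtopology S (A1 \<union> A2)"
  have T: "tychonoff T"
    by (simp add: T_def S tychonoff_subtopology)
  have topT: "A1 \<union> A2 = topspace T"
    using A1 A2 closedin_subset by (auto simp: T_def)
  have cl: "closedin T A1" "closedin T A2"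
    unfolding T_def using A1 A2 by (simp_all add: closedin_subset_topspace)
  have sub: "subtopology T A1 = subtopology S A1" "subtopology T A2 = subtopology S A2"
    by (simp_all add: T_def subtopology_subtopology Un_Int_eq)
  have "P T"
  proof (cases "finite (UNIV::'a set)")
    case True
    have T2: "tychonoff (subtopology T A2)"
      using T by (rule tychonoff_subtopology)
    have A2': "topspace T - A1 \<subseteq> topspace (subtopology T A2)"
      using topT by auto
    have "P (subtopology (subtopology T A2) (topspace T - A1))"
      using compactness_like_clopen[OF T2 _ tychonoff_finite_imp_clopen[OF True T2 A2']] P2 sub by simp
    then have "P (subtopology T (topspace T - A1))"
      using A2' by (simp add: subtopology_subtopology Int_absorb1)
    then show ?thesis
      using compactness_like_clopen_partition[OF T cl(1)] tychonoff_finite_imp_clopen[OF True T]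
        closedin_subset[OF cl(1)] P1 sub by simp
  next
    case False
    obtain W :: "'a topology" and g W1 where W: "tychonoff W" "perfect_map W T g"
      "closedin W W1" "openin W W1"
      "subtopology T A1 homeomorphic_space subtopology W W1"
      "subtopology T A2 homeomorphic_space subtopology W (topspace W - W1)"
      by (rule closed_cover_as_clopen_partition[OF False T cl topT])
    have "P (subtopology W W1)" "P (subtopology W (topspace W - W1))"
      using compactness_like_homeomorphic_space[OF tychonoff_subtopology[OF T] W(5)]
        compactness_like_homeomorphic_space[OF tychonoff_subtopology[OF T] W(6)] P1 P2 sub
      by simp_all
    then have "P W"
      by (rule compactness_like_clopen_partition[OF W(1,3,4)])
    then show ?thesis
      using compactness_like_perfect_map[OF W(1) T W(2)] by blast
  qed
  then show ?thesis
    by (simp add: T_def)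
qed

lemma compactness_like_closedin_Union:
  assumes S: "tychonoff S" and "finite \<C>"
    and "\<And>A. A \<in> \<C> \<Longrightarrow> closedin S A \<and> P (subtopology S A)"
  shows "P (subtopology S (\<Union>\<C>))"
  using assms(2,3)
proof (induction \<C> rule: finite_induct)
  case empty
  then show ?case
    using compactness_like_empty[OF S] by simp
next
  case (insert A \<C>)
  then have "closedin S (\<Union>\<C>)"
    by (intro closedin_Union) auto
  then show ?case
    using compactness_like_closedin_Un[OF S, of A "\<Union>\<C>"] insert by simp
qed

lemma superlevel_set_in_lambda_P:
  assumes Y: "is_extension X Y" and Z: "is_compactification Y Z" and B: "is_stone_cech X B"
    and \<phi>: "continuous_map B Z \<phi>" and \<phi>_id: "\<forall>x\<in>topspace X. \<phi> x = x"
    and PY: "P Y"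
    and f: "continuous_map Z euclideanreal f" and f0: "f ` (topspace Y - topspace X) \<subseteq> {0}"
  defines "C \<equiv> {x \<in> topspace X. 1/2 < f x}"
  shows "openin X C" "C \<in> Coz X" "P (subtopology X (X closure_of C))"
    "{b \<in> topspace B. 1/2 < f (\<phi> b)} \<subseteq> B interior_of (B closure_of C)"
proof -
  have XY: "subtopology Y (topspace X) = X"
    using Y unfolding is_extension_def by auto
  have fY: "continuous_map Y euclideanreal f"
    using continuous_map_from_subtopology[OF f, of "topspace Y"] Z
    by (simp add: is_compactification_def is_extension_def)
  have fX: "continuous_map X euclideanreal f"
    using continuous_map_from_subtopology[OF fY, of "topspace X"] XY by simp
  have "openin X {x \<in> topspace X. f x \<in> {1/2<..}}"
    by (rule openin_continuous_map_preimage[OF fX]) simp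
  then show "openin X C"
    by (simp add: C_def)
  show "C \<in> Coz X"
    unfolding C_def by (rule Coz_superlevel_set[OF fX])
  show "P (subtopology X (X closure_of C))"
    using compactness_like_closedin[OF compactification_imp_tychonoff(2)[OF Z] PY closedin_closure_of]
      subtopology_closure_of_superlevel_set[OF Y fY f0, of "1/2"]
    by (simp add: C_def)
  show "{b \<in> topspace B. 1/2 < f (\<phi> b)} \<subseteq> B interior_of (B closure_of C)"
  proof (rule openin_subset_interior_closure_of_dense)
    show "openin B {b \<in> topspace B. 1/2 < f (\<phi> b)}"
      using openin_continuous_map_preimage[OF continuous_map_compose[OF \<phi> f], of "{1/2<..}"] by simp
    show "B closure_of topspace X = topspace B"
      using B by (simp add: is_stone_cech_def is_compactification_def is_extension_def)
    show "{b \<in> topspace B. 1/2 < f (\<phi> b)} \<inter> topspace X \<subseteq> C"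
      using \<phi>_id by (auto simp: C_def)
  qed
qed

lemma compactness_like_extension_imp_locally_P:
  assumes Y: "is_extension X Y" and R: "compact_remainder X Y" and Z: "is_compactification Y Z"
    and B: "is_stone_cech X B" and \<phi>: "continuous_map B Z \<phi>" and \<phi>_id: "\<forall>x\<in>topspace X. \<phi> x = x"
    and PY: "P Y"
  shows "locally_P P X"
  unfolding locally_P_def
proof
  fix x assume x: "x \<in> topspace X"
  then have "x \<in> topspace Z - (topspace Y - topspace X)"
    using Y Z by (auto simp: is_compactification_def is_extension_def)
  then obtain f where f: "continuous_map Z euclideanreal f" "f ` (topspace Y - topspace X) \<subseteq> {0}" "f x = 1"
    using tychonoff_separate_point_compactin[OF compactification_imp_tychonoff(1)[OF Z]
        compactin_remainder_compactification[OF R Z]] by blast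
  note C = superlevel_set_in_lambda_P[OF Y Z B \<phi> \<phi>_id PY f(1,2)]
  show "\<exists>U. openin X U \<and> x \<in> U \<and> P (subtopology X (X closure_of U))"
    by (intro exI[of _ "{x \<in> topspace X. 1/2 < f x}"] conjI C(1,3)) (simp add: x f(3))
qed

lemma compactness_like_extension_imp_lambda_P:
  assumes Y: "is_extension X Y" and R: "compact_remainder X Y" and Z: "is_compactification Y Z"
    and B: "is_stone_cech X B" and \<phi>: "continuous_map B Z \<phi>" and \<phi>_id: "\<forall>x\<in>topspace X. \<phi> x = x"
    and PY: "P Y"
  shows "topspace B - lambda_P P X B \<subseteq> {b \<in> topspace B. \<phi> b \<in> topspace Y - topspace X}"
proof
  fix b assume b: "b \<in> topspace B - lambda_P P X B"
  show "b \<in> {b \<in> topspace B. \<phi> b \<in> topspace Y - topspace X}"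
  proof (rule ccontr)
    assume "b \<notin> {b \<in> topspace B. \<phi> b \<in> topspace Y - topspace X}"
    moreover have "\<phi> b \<in> topspace Z"
      using \<phi> b by (simp add: continuous_map_def Pi_iff)
    ultimately have "\<phi> b \<in> topspace Z - (topspace Y - topspace X)"
      using b by blast
    then obtain f where f: "continuous_map Z euclideanreal f" "f ` (topspace Y - topspace X) \<subseteq> {0}"
      "f (\<phi> b) = 1"
      using tychonoff_separate_point_compactin[OF compactification_imp_tychonoff(1)[OF Z]
          compactin_remainder_compactification[OF R Z]] by blast
    note C = superlevel_set_in_lambda_P[OF Y Z B \<phi> \<phi>_id PY f(1,2)]
    have "b \<in> B interior_of (B closure_of {x \<in> topspace X. 1/2 < f x})"
      using C(4) b f(3) by auto
    then have "b \<in> lambda_P P X B"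
      unfolding lambda_P_def using C(2,3) by blast
    then show False
      using b by blast
  qed
qed

lemma compactness_like_closedin_off_remainder:
  assumes X: "tychonoff X" and Y: "is_extension X Y" and Z: "is_compactification Y Z"
    and B: "is_stone_cech X B" and \<phi>: "continuous_map B Z \<phi>" and \<phi>_id: "\<forall>x\<in>topspace X. \<phi> x = x"
    and H: "topspace B - lambda_P P X B \<subseteq> {b \<in> topspace B. \<phi> b \<in> topspace Y - topspace X}"
    and F: "closedin Y F" and FX: "F \<subseteq> topspace X"
  shows "P (subtopology Y F)"
proof -
  obtain \<C> where \<C>: "finite \<C>" "\<And>C. C \<in> \<C> \<Longrightarrow> C \<in> Coz X \<and> P (subtopology X (X closure_of C))"
    "F \<subseteq> (\<Union>C\<in>\<C>. X closure_of C)"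
    using closedin_off_remainder_finite_cover[OF Z B \<phi> \<phi>_id H F FX] by blast
  have XY: "subtopology Y (topspace X) = X"
    using Y by (simp add: is_extension_def)
  have FX_closed: "closedin X F"
    using closedin_subset_topspace[OF F FX] XY by simp
  have "P (subtopology X (\<Union>C\<in>\<C>. X closure_of C \<inter> F))"
  proof (rule compactness_like_closedin_Union[OF X])
    show "finite ((\<lambda>C. X closure_of C \<inter> F) ` \<C>)"
      using \<C>(1) by simp
    fix A assume "A \<in> (\<lambda>C. X closure_of C \<inter> F) ` \<C>"
    then obtain C where C: "C \<in> \<C>" "A = X closure_of C \<inter> F"
      by blast
    have "closedin (subtopology X (X closure_of C)) (X closure_of C \<inter> F)"
      by (rule closedin_subtopology_Int_closed[OF FX_closed])
    then have "P (subtopology (subtopology X (X closure_of C)) (X closure_of C \<inter> F))"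
      by (rule compactness_like_closedin[OF tychonoff_subtopology[OF X] conjunct2[OF \<C>(2)[OF C(1)]]])
    then show "closedin X A \<and> P (subtopology X A)"
      using C(2) FX_closed by (simp add: subtopology_subtopology closedin_Int)
  qed
  moreover have "(\<Union>C\<in>\<C>. X closure_of C \<inter> F) = F"
    using \<C>(3) by blast
  moreover have "subtopology Y F = subtopology X F"
    using subtopology_subtopology[of Y "topspace X" F] XY FX by (simp add: Int_absorb1)
  ultimately show ?thesis
    by simp
qed

lemma compactness_like_if_closed_off_compactin:
  assumes Y: "tychonoff Y" and K_compact: "compactin Y K"
    and H: "\<And>D. closedin Y D \<Longrightarrow> D \<inter> K = {} \<Longrightarrow> P (subtopology Y D)"
  shows "P Y"
proof (cases "K = {}")
  case True
  then show ?thesis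
    using H[OF closedin_topspace] by simp
next
  case False
  then obtain p where p: "p \<in> K"
    by blast
  have K_closed: "closedin Y K"
    using K_compact Y by (simp add: compactin_imp_closedin tychonoff_def)
  define Q where "Q = quotient_topology Y (collapse_map K p)"
  have tQ: "tychonoff Q"
    unfolding Q_def by (rule tychonoff_collapse_topology[OF K_closed K_compact p Y])
  have "P Q"
  proof (rule compactness_like_mrowka_W[unfolded mrowka_W_def, rule_format, of Q p "{U. openin Q U \<and> p \<in> U}"],
      intro conjI ballI allI impI)
    show "p \<in> topspace Q"
      by (simp add: Q_def topspace_collapse_topology[OF K_closed K_compact p])
    fix U assume "U \<in> {U. openin Q U \<and> p \<in> U}"
    then have "closedin Q (topspace Q - U)" "p \<notin> topspace Q - U"
      by auto
    then show "P (subtopology Q (topspace Q - U))"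
      using closedin_collapse_topology_avoiding_point[OF K_closed K_compact p] H
      unfolding Q_def by metis
  qed (use tQ in auto)
  then show ?thesis
    using compactness_like_perfect_map[OF Y tQ] perfect_map_collapse[OF K_closed K_compact p]
    by (simp add: Q_def)
qed

lemma compactness_like_extension_if_lambda_P:
  assumes X: "tychonoff X" and Y: "is_extension X Y" and R: "compact_remainder X Y"
    and Z: "is_compactification Y Z" and B: "is_stone_cech X B"
    and \<phi>: "continuous_map B Z \<phi>" and \<phi>_id: "\<forall>x\<in>topspace X. \<phi> x = x"
    and H: "topspace B - lambda_P P X B \<subseteq> {b \<in> topspace B. \<phi> b \<in> topspace Y - topspace X}"
  shows "P Y"
proof (rule compactness_like_if_closed_off_compactin)
  show "tychonoff Y"
    by (rule compactification_imp_tychonoff(2)[OF Z])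
  show "compactin Y (topspace Y - topspace X)"
    using R by (simp add: compact_remainder_def)
  fix D assume "closedin Y D" "D \<inter> (topspace Y - topspace X) = {}"
  moreover from this have "D \<subseteq> topspace X"
    using closedin_subset by blast
  ultimately show "P (subtopology Y D)"
    by (intro compactness_like_closedin_off_remainder[OF X Y Z B \<phi> \<phi>_id H])
qed

end

theorem lemma4p7:
  fixes P :: "'a topology \<Rightarrow> bool"
    and X Y Z B :: "'a topology"
    and \<phi> :: "'a \<Rightarrow> 'a"
  assumes "compactness_like P"
    and "tychonoff X"
    and "is_extension X Y"
    and "compact_remainder X Y"
    and "is_compactification Y Z"
    and "is_stone_cech X B"
    and "continuous_map B Z \<phi>"
    and "\<forall>x\<in>topspace X. \<phi> x = x"
  shows "in_E P X Y \<longleftrightarrow>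
           locally_P P X \<and>
           topspace B - lambda_P P X B \<subseteq> {b \<in> topspace B. \<phi> b \<in> topspace Y - topspace X}"
  using compactness_like_extension_imp_locally_P[OF assms(1,3-8)]
    compactness_like_extension_imp_lambda_P[OF assms(1,3-8)]
    compactness_like_extension_if_lambda_P[OF assms]
  unfolding in_E_def using assms(3,4) by blast

end
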